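(* For any $q=\Omega(1)$, any $\epsilon>0$, and any two parties $u$, $v$ holding input vectors $\mathbf{x}_u,\mathbf{x}_v\in\mathbb{R}^d$ respectively, there is a (randomized) quantization method in which $u$ sends $O(d\log q)$ bits to $v$, and if $\|\mathbf{x}_u-\mathbf{x}_v\|=O(q\epsilon)$, then $v$ can recover an unbiased estimate $\mathbf{z}$ of $\mathbf{x}_u$ (i.e. $\mathbb{E}[\mathbf{z}]=\mathbf{x}_u$) with $\|\mathbf{z}-\mathbf{x}_u\|=O(\epsilon)$.
   Context: $\|\cdot\|$ denotes a fixed one of the $\ell_1$, $\ell_2$ or $\ell_\infty$ norms on $\mathbb{R}^d$. Asymptotic notation hides absolute constants independent of $d,q,\epsilon$ and the inputs. Party $v$ uses its own vector $\mathbf{x}_v$ when decoding. *)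

theory Defs
  imports "HOL-Probability.Probability"
begin

text \<open>The fixed norm on R^d: one of l1, l2, l-infinity.
  Vectors in R^d are represented as functions nat => real; only the
  coordinates 0..d-1 are relevant.\<close>

datatype normkind = L1 | L2 | Linf

fun vnorm :: "normkind \<Rightarrow> nat \<Rightarrow> (nat \<Rightarrow> real) \<Rightarrow> real" where
  "vnorm L1 d x = (\<Sum>i<d. \<bar>x i\<bar>)"
| "vnorm L2 d x = sqrt (\<Sum>i<d. (x i)\<^sup>2)"
| "vnorm Linf d x = Max (insert 0 ((\<lambda>i. \<bar>x i\<bar>) ` {..<d}))"

definition vecs :: "nat \<Rightarrow> (nat \<Rightarrow> real) set" where
  "vecs d = {x. \<forall>i\<ge>d. x i = 0}"

end

theory Submission
  imports Defs "HOL-Analysis.Harmonic_Numbers"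
begin

text \<open>Let h = \<epsilon> / vnorm nk d 1. Rounding xu / h randomly and coordinatewise to one of the two
  neighbouring integers gives an unbiased lattice point y that is off by at most one grid step in
  each coordinate, i.e. by at most \<epsilon> in norm. Since vnorm nk d 1 times the l1 norm is at most d
  times the norm, y lies within l1 distance R = (c q + 1) d of xv / h. So it suffices to send a
  colour of y under a colouring of Z^d that separates points at l1 distance at most 2 R: the
  receiver takes the unique point of that colour near xv / h. Such a colouring with
  2^O(d log q) colours exists because an l1 ball of radius O(q d) contains only O(q)^d lattice
  points.\<close>

lemma vnorm_ones_pos: "d > 0 \<Longrightarrow> vnorm nk d (\<lambda>_. 1) > 0"
  by (cases nk) (auto simp: image_constant_conv)

lemma vnorm_le_mult_vnorm_ones:
  assumes "\<And>i. i < d \<Longrightarrow> \<bar>x i\<bar> \<le> h"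
  shows "vnorm nk d x \<le> h * vnorm nk d (\<lambda>_. 1)"
proof (cases "d = 0")
  case True then show ?thesis by (cases nk) auto
next
  case False
  then have h: "h \<ge> 0" using assms[of 0] by simp
  show ?thesis
  proof (cases nk)
    case L1
    have "(\<Sum>i<d. \<bar>x i\<bar>) \<le> (\<Sum>i<d. h)" by (rule sum_mono) (simp add: assms)
    then show ?thesis using L1 by (simp add: mult.commute)
  next
    case L2
    have "(\<Sum>i<d. (x i)\<^sup>2) \<le> (\<Sum>i<d. h\<^sup>2)"
      using assms by (intro sum_mono) (simp add: abs_le_square_iff[symmetric] h)
    then have "sqrt (\<Sum>i<d. (x i)\<^sup>2) \<le> sqrt (h\<^sup>2 * real d)" by (simp add: mult.commute)
    then show ?thesis using L2 h by (simp add: real_sqrt_mult)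
  next
    case Linf
    then show ?thesis using assms h False by (auto intro!: Max.boundedI simp: image_constant_conv)
  qed
qed

lemma vnorm_ones_mult_sum_abs_le:
  "vnorm nk d (\<lambda>_. 1) * (\<Sum>i<d. \<bar>x i\<bar>) \<le> real d * vnorm nk d x"
proof (cases nk)
  case L1 then show ?thesis by simp
next
  case L2
  have "(\<Sum>i<d. \<bar>x i\<bar>)\<^sup>2 \<le> (\<Sum>i<d. \<bar>x i\<bar>\<^sup>2) * card {..<d}"
    by (rule sum_squared_le_sum_of_squares)
  then have "(\<Sum>i<d. \<bar>x i\<bar>) \<le> sqrt (real d) * sqrt (\<Sum>i<d. (x i)\<^sup>2)"
    by (simp add: real_le_rsqrt real_sqrt_mult[symmetric] mult.commute)
  then have "sqrt (real d) * (\<Sum>i<d. \<bar>x i\<bar>) \<le> sqrt (real d) * (sqrt (real d) * sqrt (\<Sum>i<d. (x i)\<^sup>2))"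
    by (rule mult_left_mono) simp
  then show ?thesis using L2 by (simp add: mult.assoc[symmetric])
next
  case Linf
  have "vnorm Linf d (\<lambda>_. 1) \<le> 1"
    by (auto intro!: Max.boundedI)
  then have "vnorm Linf d (\<lambda>_. 1) * (\<Sum>i<d. \<bar>x i\<bar>) \<le> (\<Sum>i<d. \<bar>x i\<bar>)"
    by (intro mult_left_le_one_le) (auto intro: sum_nonneg)
  also have "\<dots> \<le> (\<Sum>i<d. vnorm Linf d x)"
    by (intro sum_mono Max_ge) auto
  finally show ?thesis using Linf by simp
qed

definition l1_ball :: "nat \<Rightarrow> nat \<Rightarrow> (nat \<Rightarrow> int) set" where
  "l1_ball d D = {w \<in> PiE {..<d} (\<lambda>_. {-int D..int D}). (\<Sum>i<d. \<bar>w i\<bar>) \<le> int D}"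

lemma finite_l1_ball: "finite (l1_ball d D)"
  unfolding l1_ball_def by (intro finite_subset[OF Collect_subset] finite_PiE) auto

lemma sum_power_abs_le:
  fixes t :: real
  assumes "0 \<le> t" "t < 1"
  shows "(\<Sum>z\<in>{-int D..int D}. t ^ nat \<bar>z\<bar>) \<le> 2 / (1 - t)"
proof -
  have split: "{-int D..int D} \<subseteq> int ` {..D} \<union> uminus ` int ` {..D}"
  proof
    fix z assume "z \<in> {-int D..int D}"
    then have "nat \<bar>z\<bar> \<in> {..D}" "z = int (nat \<bar>z\<bar>) \<or> z = - int (nat \<bar>z\<bar>)" by auto
    then show "z \<in> int ` {..D} \<union> uminus ` int ` {..D}" by blast
  qed
  have geometric: "(\<Sum>k\<le>D. t ^ k) \<le> 1 / (1 - t)"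
  proof -
    have "(\<Sum>k\<le>D. t ^ k) = (1 - t ^ Suc D) / (1 - t)"
      using assms by (simp add: sum_gp0)
    also have "\<dots> \<le> 1 / (1 - t)"
      using assms by (intro divide_right_mono) auto
    finally show ?thesis .
  qed
  have "(\<Sum>z\<in>{-int D..int D}. t ^ nat \<bar>z\<bar>)
      \<le> (\<Sum>z\<in>int ` {..D} \<union> uminus ` int ` {..D}. t ^ nat \<bar>z\<bar>)"
    using split assms by (intro sum_mono2) auto
  also have "\<dots> \<le> (\<Sum>z\<in>int ` {..D}. t ^ nat \<bar>z\<bar>) + (\<Sum>z\<in>uminus ` int ` {..D}. t ^ nat \<bar>z\<bar>)"
    using assms by (subst sum_Un) (auto intro: sum_nonneg)
  also have "\<dots> = 2 * (\<Sum>k\<le>D. t ^ k)"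
    by (simp add: sum.reindex inj_on_def)
  finally show ?thesis using geometric by simp
qed

text \<open>Rankin's trick: weighting each w in the box by t to the power of its l1 norm, the points of
  the ball weigh at least t^D each, and the total weight of the box factorises over coordinates.\<close>
lemma card_l1_ball_mult_power_le:
  fixes t :: real
  assumes t: "0 < t" "t < 1"
  shows "real (card (l1_ball d D)) * t ^ D \<le> (2 / (1 - t)) ^ d"
proof -
  define B where "B = PiE {..<d} (\<lambda>_. {-int D..int D})"
  have "finite B" "l1_ball d D \<subseteq> B"
    unfolding B_def l1_ball_def by (auto intro: finite_PiE)
  have weight: "t ^ D \<le> (\<Prod>i<d. t ^ nat \<bar>w i\<bar>)" if "w \<in> l1_ball d D" for w
  proof -
    have "int (\<Sum>i<d. nat \<bar>w i\<bar>) = (\<Sum>i<d. \<bar>w i\<bar>)" by (simp add: of_nat_sum)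
    also have "\<dots> \<le> int D" using that by (simp add: l1_ball_def)
    finally have "(\<Sum>i<d. nat \<bar>w i\<bar>) \<le> D" by (simp only: of_nat_le_iff)
    then have "t ^ D \<le> t ^ (\<Sum>i<d. nat \<bar>w i\<bar>)"
      using t by (intro power_decreasing) auto
    then show ?thesis by (simp add: power_sum)
  qed
  have "real (card (l1_ball d D)) * t ^ D = (\<Sum>w\<in>l1_ball d D. t ^ D)" by simp
  also have "\<dots> \<le> (\<Sum>w\<in>l1_ball d D. \<Prod>i<d. t ^ nat \<bar>w i\<bar>)"
    by (rule sum_mono) (rule weight)
  also have "\<dots> \<le> (\<Sum>w\<in>B. \<Prod>i<d. t ^ nat \<bar>w i\<bar>)"
    by (rule sum_mono2[OF \<open>finite B\<close> \<open>l1_ball d D \<subseteq> B\<close>]) (use t in \<open>auto intro!: prod_nonneg\<close>)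
  also have "\<dots> = (\<Prod>i<d. \<Sum>z\<in>{-int D..int D}. t ^ nat \<bar>z\<bar>)"
    unfolding B_def by (rule prod_sum_PiE[symmetric]) auto
  also have "\<dots> \<le> (\<Prod>i<d. 2 / (1 - t))"
    by (rule prod_mono) (use t sum_power_abs_le in \<open>auto intro!: sum_nonneg\<close>)
  finally show ?thesis by simp
qed

lemma card_l1_ball_le:
  assumes "\<alpha> \<ge> 1"
  shows "real (card (l1_ball d (\<alpha> * d))) \<le> (2 * exp 1 * (real \<alpha> + 1)) ^ d"
proof -
  define t :: real where "t = real \<alpha> / (real \<alpha> + 1)"
  have t: "0 < t" "t < 1" using assms by (auto simp: t_def)
  have "1 / t = 1 + 1 / real \<alpha>" and "2 / (1 - t) = 2 * (real \<alpha> + 1)"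
    using assms by (simp_all add: t_def field_simps)
  moreover have "(1 + 1 / real \<alpha>) ^ \<alpha> \<le> exp 1"
    using assms by (intro exp_ge_one_plus_x_over_n_power_n) auto
  ultimately have "(1 / t) ^ \<alpha> \<le> exp 1" by simp
  then have inverse_bound: "(1 / t) ^ (\<alpha> * d) \<le> exp 1 ^ d"
    unfolding power_mult using t by (intro power_mono) auto
  have "real (card (l1_ball d (\<alpha> * d))) = real (card (l1_ball d (\<alpha> * d))) * t ^ (\<alpha> * d) * (1 / t) ^ (\<alpha> * d)"
    using t by (simp add: power_one_over)
  also have "\<dots> \<le> (2 * (real \<alpha> + 1)) ^ d * exp 1 ^ d"
    using card_l1_ball_mult_power_le[OF t, of d "\<alpha> * d"] \<open>2 / (1 - t) = _\<close> inverse_bound t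
    by (intro mult_mono) auto
  also have "\<dots> = (2 * exp 1 * (real \<alpha> + 1)) ^ d"
    by (simp add: power_mult_distrib[symmetric] mult_ac)
  finally show ?thesis .
qed

lemma greedy_coloring:
  assumes "finite V" "finite C"
    and sym: "\<And>a b. E a b \<Longrightarrow> E b a" and irrefl: "\<And>a. \<not> E a a"
    and degree: "\<And>a. a \<in> V \<Longrightarrow> card {b\<in>V. E a b} < card C"
  shows "\<exists>f. f ` V \<subseteq> C \<and> (\<forall>a\<in>V. \<forall>b\<in>V. E a b \<longrightarrow> f a \<noteq> f b)"
  using assms(1) degree
proof (induction V rule: finite_induct)
  case empty then show ?case by auto
next
  case (insert x F)
  have "card {b\<in>F. E a b} < card C" if "a \<in> F" for a
  proof -
    have "card {b\<in>F. E a b} \<le> card {b\<in>insert x F. E a b}"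
      using insert.hyps(1) by (intro card_mono) (simp_all, blast)
    with insert.prems[of a] that show ?thesis by simp
  qed
  with insert.IH obtain f where f: "f ` F \<subseteq> C" "\<forall>a\<in>F. \<forall>b\<in>F. E a b \<longrightarrow> f a \<noteq> f b"
    by blast
  define N where "N = {b\<in>F. E x b}"
  have "finite N" using insert.hyps(1) by (simp add: N_def)
  have "card (f ` N) \<le> card N"
    using \<open>finite N\<close> by (rule card_image_le)
  also have "card N \<le> card {b\<in>insert x F. E x b}"
    unfolding N_def using insert.hyps(1) by (intro card_mono) auto
  also have "\<dots> < card C" using insert.prems by auto
  finally have "\<not> C \<subseteq> f ` N"
    using \<open>finite N\<close> card_mono[of "f ` N" C] by auto
  then obtain new where new: "new \<in> C" "new \<notin> f ` N" by auto
  define g where "g = f(x := new)"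
  have new_x: "g x \<noteq> g b" if "b \<in> insert x F" "E x b" for b
  proof -
    have "b \<in> N" using that irrefl by (auto simp: N_def)
    then show ?thesis using new(2) insert.hyps(2) by (auto simp: g_def N_def)
  qed
  have "g a \<noteq> g b" if ab: "a \<in> insert x F" "b \<in> insert x F" "E a b" for a b
  proof -
    consider "a = x" | "b = x" | "a \<in> F" "b \<in> F" "a \<noteq> x" "b \<noteq> x"
      using ab(1,2) by blast
    then show ?thesis
    proof cases
      case 1 then show ?thesis using new_x ab by blast
    next
      case 2 then show ?thesis using new_x[of a] sym[OF ab(3)] ab(1) by metis
    next
      case 3 then show ?thesis using f(2) ab(3) by (simp add: g_def)
    qed
  qed
  with f(1) new(1) show ?case by (intro exI[of _ g]) (auto simp: g_def)
qed

definition int_vecs :: "nat \<Rightarrow> (nat \<Rightarrow> int) set" where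
  "int_vecs d = {y. \<forall>i\<ge>d. y i = 0}"

definition l1_separating :: "nat \<Rightarrow> nat \<Rightarrow> ((nat \<Rightarrow> int) \<Rightarrow> 'c) \<Rightarrow> bool" where
  "l1_separating d D col \<longleftrightarrow> (\<forall>y\<in>int_vecs d. \<forall>y'\<in>int_vecs d.
     y \<noteq> y' \<longrightarrow> (\<Sum>i<d. \<bar>y i - y' i\<bar>) \<le> int D \<longrightarrow> col y \<noteq> col y')"

definition torus_reduce :: "int \<Rightarrow> nat \<Rightarrow> (nat \<Rightarrow> int) \<Rightarrow> (nat \<Rightarrow> int)" where
  "torus_reduce P d y = (\<lambda>i. if i < d then y i mod P else 0)"

lemma torus_reduce_neq:
  assumes "y \<in> int_vecs d" "y' \<in> int_vecs d" "y \<noteq> y'" "(\<Sum>i<d. \<bar>y i - y' i\<bar>) < P"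
  shows "torus_reduce P d y \<noteq> torus_reduce P d y'"
proof
  assume same: "torus_reduce P d y = torus_reduce P d y'"
  from \<open>y \<noteq> y'\<close> obtain i where "y i \<noteq> y' i" by (meson ext)
  have "i < d"
  proof (rule ccontr)
    assume "\<not> i < d"
    with assms(1,2) have "y i = y' i" by (simp add: int_vecs_def)
    with \<open>y i \<noteq> y' i\<close> show False ..
  qed
  have "\<bar>y i - y' i\<bar> < P"
    using member_le_sum[of i "{..<d}" "\<lambda>i. \<bar>y i - y' i\<bar>"] assms(4) \<open>i < d\<close> by simp
  moreover have "P dvd y i - y' i"
    using fun_cong[OF same, of i] \<open>i < d\<close> by (simp add: torus_reduce_def mod_eq_dvd_iff)
  ultimately show False
    using \<open>y i \<noteq> y' i\<close> dvd_imp_le_int[of "y i - y' i" P] by simp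
qed

lemma torus_reduce_in_translates:
  assumes "(\<Sum>i<d. \<bar>y i - y' i\<bar>) \<le> int D"
  shows "torus_reduce P d y' \<in> (\<lambda>w. torus_reduce P d (\<lambda>i. torus_reduce P d y i + w i)) ` l1_ball d D"
proof
  define w where "w = restrict (\<lambda>i. y' i - y i) {..<d}"
  have "w i \<in> {-int D..int D}" if "i < d" for i
  proof -
    have "\<bar>y i - y' i\<bar> \<le> int D"
      using member_le_sum[of i "{..<d}" "\<lambda>i. \<bar>y i - y' i\<bar>"] assms that by simp
    then show ?thesis using that by (simp add: w_def abs_le_iff)
  qed
  moreover have "(\<Sum>i<d. \<bar>w i\<bar>) = (\<Sum>i<d. \<bar>y i - y' i\<bar>)"
    by (intro sum.cong) (simp_all add: w_def abs_minus_commute)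
  ultimately show "w \<in> l1_ball d D"
    using assms unfolding l1_ball_def by (simp add: PiE_iff w_def)
  show "torus_reduce P d y' = torus_reduce P d (\<lambda>i. torus_reduce P d y i + w i)"
    by (auto simp: torus_reduce_def w_def mod_add_left_eq)
qed

text \<open>Distinct points of the lattice at l1 distance at most D stay distinct modulo P = 2D + 1,
  and a point of the finite torus has at most card (l1_ball d D) such neighbours; so a greedy
  colouring of the torus pulls back to a separating colouring of the lattice.\<close>
lemma lattice_coloring:
  fixes C :: "'c set"
  assumes "finite C" "card (l1_ball d D) < card C"
  shows "\<exists>col. (\<forall>y. col y \<in> C) \<and> l1_separating d D col"
proof -
  define P :: int where "P = 2 * int D + 1"
  define red where "red = torus_reduce P d"
  define T where "T = PiE_dflt {..<d} (0::int) (\<lambda>_. {0..<P})"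
  define close where "close y y' \<longleftrightarrow> y \<in> int_vecs d \<and> y' \<in> int_vecs d \<and> (\<Sum>i<d. \<bar>y i - y' i\<bar>) \<le> int D"
    for y y'
  define E where "E a b \<longleftrightarrow> a \<noteq> b \<and> (\<exists>y y'. close y y' \<and> red y = a \<and> red y' = b)" for a b
  have "finite T" unfolding T_def by (rule finite_PiE_dflt) auto
  have "P > 0" by (simp add: P_def)
  then have red_T: "red y \<in> T" for y
    by (auto simp: T_def PiE_dflt_def red_def torus_reduce_def)
  have "close y' y" if "close y y'" for y y'
    using that by (simp add: close_def abs_minus_commute)
  then have "E b a" if "E a b" for a b
    using that unfolding E_def by blast
  moreover have "\<not> E a a" for a by (simp add: E_def)
  moreover have "card {b\<in>T. E a b} < card C" for a
  proof -
    have "{b\<in>T. E a b} \<subseteq> (\<lambda>w. red (\<lambda>i. a i + w i)) ` l1_ball d D"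
      using torus_reduce_in_translates unfolding E_def close_def red_def by blast
    then have "card {b\<in>T. E a b} \<le> card ((\<lambda>w. red (\<lambda>i. a i + w i)) ` l1_ball d D)"
      by (intro card_mono finite_imageI finite_l1_ball)
    also have "\<dots> \<le> card (l1_ball d D)"
      by (rule card_image_le[OF finite_l1_ball])
    finally show ?thesis using assms(2) by simp
  qed
  ultimately obtain f where f: "f ` T \<subseteq> C" "\<forall>a\<in>T. \<forall>b\<in>T. E a b \<longrightarrow> f a \<noteq> f b"
    using greedy_coloring[OF \<open>finite T\<close> assms(1)] by blast
  have "E (red y) (red y')" if "close y y'" "y \<noteq> y'" for y y'
    using that torus_reduce_neq[of y d y' P] unfolding E_def close_def red_def P_def by force
  then have "f (red y) \<noteq> f (red y')" if "close y y'" "y \<noteq> y'" for y y'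
    using that f(2) red_T by blast
  with f(1) red_T show ?thesis
    unfolding l1_separating_def by (intro exI[of _ "f \<circ> red"]) (auto simp: close_def)
qed

definition random_round :: "real \<Rightarrow> int pmf" where
  "random_round r = map_pmf (\<lambda>b. \<lfloor>r\<rfloor> + of_bool b) (bernoulli_pmf (frac r))"

lemma random_round_close: "z \<in> set_pmf (random_round r) \<Longrightarrow> \<bar>real_of_int z - r\<bar> \<le> 1"
  using frac_lt_1[of r] frac_ge_0[of r] by (auto simp: random_round_def frac_def)

lemma expectation_random_round: "measure_pmf.expectation (random_round r) real_of_int = r"
  using frac_lt_1[of r] frac_ge_0[of r]
  by (simp add: random_round_def frac_def algebra_simps)

definition lattice_round :: "nat \<Rightarrow> real \<Rightarrow> (nat \<Rightarrow> real) \<Rightarrow> (nat \<Rightarrow> int) pmf" where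
  "lattice_round d h x = Pi_pmf {..<d} 0 (\<lambda>i. random_round (x i / h))"

lemma lattice_round_support:
  assumes "y \<in> set_pmf (lattice_round d h x)"
  shows "y \<in> int_vecs d" "\<And>i. i < d \<Longrightarrow> \<bar>real_of_int (y i) - x i / h\<bar> \<le> 1"
  using assms random_round_close
  by (auto simp: lattice_round_def set_Pi_pmf PiE_dflt_def int_vecs_def)

lemma expectation_lattice_round:
  assumes "i < d" "h \<noteq> 0"
  shows "measure_pmf.expectation (lattice_round d h x) (\<lambda>y. h * real_of_int (y i)) = x i"
proof -
  have "map_pmf (\<lambda>y. y i) (lattice_round d h x) = random_round (x i / h)"
    using assms(1) by (simp add: lattice_round_def Pi_pmf_component)
  then have "measure_pmf.expectation (lattice_round d h x) (\<lambda>y. real_of_int (y i)) = x i / h"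
    using expectation_random_round[of "x i / h"] by (metis integral_map_pmf)
  then show ?thesis using assms(2) by simp
qed

definition near_lattice_points :: "nat \<Rightarrow> real \<Rightarrow> real \<Rightarrow> (nat \<Rightarrow> real) \<Rightarrow> (nat \<Rightarrow> int) set" where
  "near_lattice_points d h R x = {y \<in> int_vecs d. (\<Sum>i<d. \<bar>real_of_int (y i) - x i / h\<bar>) \<le> R}"

text \<open>On messages outside col ` near_lattice_points d h R x the result is unspecified; the encoder
  never produces them.\<close>
definition decode_near ::
    "nat \<Rightarrow> real \<Rightarrow> real \<Rightarrow> ((nat \<Rightarrow> int) \<Rightarrow> 'c) \<Rightarrow> 'c \<Rightarrow> (nat \<Rightarrow> real) \<Rightarrow> (nat \<Rightarrow> real)" where
  "decode_near d h R col m x = (\<lambda>i. h * real_of_int (the_inv_into (near_lattice_points d h R x) col m i))"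

lemma inj_on_near_lattice_points:
  assumes "l1_separating d D col" "2 * R \<le> real D"
  shows "inj_on col (near_lattice_points d h R x)"
proof (rule inj_onI, rule ccontr)
  fix y y' assume y: "y \<in> near_lattice_points d h R x" and y': "y' \<in> near_lattice_points d h R x"
    and "col y = col y'" "y \<noteq> y'"
  have "(\<Sum>i<d. \<bar>real_of_int (y i) - real_of_int (y' i)\<bar>)
      \<le> (\<Sum>i<d. \<bar>real_of_int (y i) - x i / h\<bar> + \<bar>real_of_int (y' i) - x i / h\<bar>)"
    by (intro sum_mono) linarith
  also have "\<dots> \<le> real D"
    using y y' assms(2) by (simp add: near_lattice_points_def sum.distrib)
  finally have "real_of_int (\<Sum>i<d. \<bar>y i - y' i\<bar>) \<le> real_of_int (int D)" by simp
  then have "(\<Sum>i<d. \<bar>y i - y' i\<bar>) \<le> int D" by (simp only: of_int_le_iff)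
  with assms(1) y y' \<open>y \<noteq> y'\<close> \<open>col y = col y'\<close> show False
    by (auto simp: l1_separating_def near_lattice_points_def)
qed

lemma lattice_round_near:
  assumes "h > 0" "y \<in> set_pmf (lattice_round d h xu)"
    and "(\<Sum>i<d. \<bar>xu i - xv i\<bar>) \<le> (R - real d) * h"
  shows "y \<in> near_lattice_points d h R xv"
proof -
  have "(\<Sum>i<d. \<bar>real_of_int (y i) - xv i / h\<bar>)
      \<le> (\<Sum>i<d. \<bar>real_of_int (y i) - xu i / h\<bar> + \<bar>xu i - xv i\<bar> / h)"
  proof (rule sum_mono)
    fix i
    have "real_of_int (y i) - xv i / h = (real_of_int (y i) - xu i / h) + (xu i - xv i) / h"
      by (simp add: diff_divide_distrib)
    then show "\<bar>real_of_int (y i) - xv i / h\<bar> \<le> \<bar>real_of_int (y i) - xu i / h\<bar> + \<bar>xu i - xv i\<bar> / h"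
      using assms(1) abs_triangle_ineq[of "real_of_int (y i) - xu i / h" "(xu i - xv i) / h"]
      by simp
  qed
  also have "\<dots> = (\<Sum>i<d. \<bar>real_of_int (y i) - xu i / h\<bar>) + (\<Sum>i<d. \<bar>xu i - xv i\<bar>) / h"
    by (simp add: sum.distrib sum_divide_distrib)
  also have "\<dots> \<le> real d + (R - real d)"
  proof (rule add_mono)
    have "(\<Sum>i<d. \<bar>real_of_int (y i) - xu i / h\<bar>) \<le> (\<Sum>i<d. 1)"
      by (rule sum_mono) (simp add: lattice_round_support(2)[OF assms(2)])
    then show "(\<Sum>i<d. \<bar>real_of_int (y i) - xu i / h\<bar>) \<le> real d" by simp
    show "(\<Sum>i<d. \<bar>xu i - xv i\<bar>) / h \<le> R - real d"
      using assms(1,3) by (simp add: divide_le_eq)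
  qed
  finally show ?thesis
    using lattice_round_support(1)[OF assms(2)] by (simp add: near_lattice_points_def)
qed

lemma decode_near_lattice_round:
  assumes "h > 0" "l1_separating d D col" "2 * R \<le> real D"
    and "(\<Sum>i<d. \<bar>xu i - xv i\<bar>) \<le> (R - real d) * h"
    and "y \<in> set_pmf (lattice_round d h xu)"
  shows "decode_near d h R col (col y) xv = (\<lambda>i. h * real_of_int (y i))"
  using the_inv_into_f_f[OF inj_on_near_lattice_points[OF assms(2,3)] lattice_round_near[OF assms(1,5,4)]]
  by (simp add: decode_near_def)

lemma lattice_quantizer_error:
  assumes "h > 0" "l1_separating d D col" "2 * R \<le> real D"
    and "(\<Sum>i<d. \<bar>xu i - xv i\<bar>) \<le> (R - real d) * h"
    and "m \<in> set_pmf (map_pmf col (lattice_round d h xu))" "i < d"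
  shows "\<bar>decode_near d h R col m xv i - xu i\<bar> \<le> h"
proof -
  obtain y where y: "y \<in> set_pmf (lattice_round d h xu)" and m: "m = col y"
    using assms(5) by auto
  have "decode_near d h R col m xv i - xu i = h * (real_of_int (y i) - xu i / h)"
    using decode_near_lattice_round[OF assms(1-4) y] assms(1) by (simp add: m right_diff_distrib)
  also have "\<bar>\<dots>\<bar> \<le> h * 1"
    using lattice_round_support(2)[OF y assms(6)] assms(1) by (simp add: abs_mult)
  finally show ?thesis by simp
qed

lemma lattice_quantizer_unbiased:
  assumes "h > 0" "l1_separating d D col" "2 * R \<le> real D"
    and "(\<Sum>i<d. \<bar>xu i - xv i\<bar>) \<le> (R - real d) * h" "i < d"
  shows "measure_pmf.expectation (map_pmf col (lattice_round d h xu))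
           (\<lambda>m. decode_near d h R col m xv i) = xu i"
proof -
  have "measure_pmf.expectation (map_pmf col (lattice_round d h xu)) (\<lambda>m. decode_near d h R col m xv i)
      = measure_pmf.expectation (lattice_round d h xu) (\<lambda>y. h * real_of_int (y i))"
    using decode_near_lattice_round[OF assms(1-4)]
    unfolding integral_map_pmf by (intro integral_cong_AE) (auto simp: AE_measure_pmf_iff)
  also have "\<dots> = xu i"
    using assms(1,5) by (intro expectation_lattice_round) auto
  finally show ?thesis .
qed

lemma exists_bits_ge_square:
  fixes q :: real
  assumes "q \<ge> 3"
  shows "\<exists>k::nat. q\<^sup>2 \<le> 2 ^ k \<and> real k + 1 \<le> 6 * ln q"
proof -
  define k where "k = nat \<lceil>2 * log 2 q\<rceil>"
  have "log 2 q \<ge> 0" using assms by simp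
  have "q\<^sup>2 = (2 powr log 2 q) powr 2"
    using assms by (simp add: powr_numeral)
  also have "\<dots> = 2 powr (2 * log 2 q)"
    by (simp only: powr_powr mult.commute)
  also have "\<dots> \<le> 2 powr real k"
    unfolding k_def by (intro powr_mono) linarith+
  also have "\<dots> = 2 ^ k" by (simp add: powr_realpow)
  finally have "q\<^sup>2 \<le> 2 ^ k" .
  have "ln q \<ge> 1"
    using assms exp_le by (subst ln_ge_iff) auto
  have "log 2 q = ln q / ln 2" by (simp add: log_def)
  also have "\<dots> \<le> ln q / (2 / 3)"
    using ln2_ge_two_thirds \<open>ln q \<ge> 1\<close> by (intro divide_left_mono) auto
  finally have "log 2 q \<le> 3 / 2 * ln q" by simp
  moreover have "real k = real_of_int \<lceil>2 * log 2 q\<rceil>"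
    unfolding k_def using \<open>log 2 q \<ge> 0\<close> by simp
  ultimately have "real k \<le> 3 * ln q + 1"
    using ceiling_correct[of "2 * log 2 q"] by linarith
  with \<open>ln q \<ge> 1\<close> \<open>q\<^sup>2 \<le> 2 ^ k\<close> show ?thesis by (intro exI[of _ k]) auto
qed

lemma bool_list_lattice_coloring:
  assumes "\<alpha> \<ge> 1" "2 * exp 1 * (real \<alpha> + 1) \<le> 2 ^ k"
  shows "\<exists>col :: (nat \<Rightarrow> int) \<Rightarrow> bool list.
           (\<forall>y. length (col y) = d * k + 1) \<and> l1_separating d (\<alpha> * d) col"
proof -
  define C where "C = {xs :: bool list. set xs \<subseteq> UNIV \<and> length xs = d * k + 1}"
  have "finite C" unfolding C_def by (rule finite_lists_length_eq) simp
  have "real (card (l1_ball d (\<alpha> * d))) \<le> (2 * exp 1 * (real \<alpha> + 1)) ^ d"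
    using assms(1) by (rule card_l1_ball_le)
  also have "\<dots> \<le> (2 ^ k) ^ d"
    using assms(2) by (intro power_mono) auto
  also have "\<dots> < 2 ^ (d * k + 1)"
    by (simp add: power_mult[symmetric] mult.commute)
  also have "\<dots> = real (card C)"
    unfolding C_def by (subst card_lists_length_eq) simp_all
  finally have "card (l1_ball d (\<alpha> * d)) < card C" by linarith
  from lattice_coloring[OF \<open>finite C\<close> this] show ?thesis
    unfolding C_def by auto
qed

definition unbiased_quantizer ::
    "normkind \<Rightarrow> nat \<Rightarrow> real \<Rightarrow> real \<Rightarrow> real \<Rightarrow> ((nat \<Rightarrow> real) \<Rightarrow> bool list pmf) \<Rightarrow>
     (bool list \<Rightarrow> (nat \<Rightarrow> real) \<Rightarrow> (nat \<Rightarrow> real)) \<Rightarrow> bool" where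
  "unbiased_quantizer nk d bits r err Enc Dec \<longleftrightarrow>
     (\<forall>xu \<in> vecs d. \<forall>m \<in> set_pmf (Enc xu). real (length m) \<le> bits) \<and>
     (\<forall>xu \<in> vecs d. \<forall>xv \<in> vecs d. vnorm nk d (xu - xv) \<le> r \<longrightarrow>
        (\<forall>m \<in> set_pmf (Enc xu). vnorm nk d (Dec m xv - xu) \<le> err) \<and>
        (\<forall>i<d. measure_pmf.expectation (Enc xu) (\<lambda>m. Dec m xv i) = xu i))"

lemma unbiased_quantizer_dim_0: "err \<ge> 0 \<Longrightarrow> unbiased_quantizer nk 0 0 r err (\<lambda>_. return_pmf []) (\<lambda>_ _ _. 0)"
  by (cases nk) (simp_all add: unbiased_quantizer_def)

lemma exists_short_separating_coloring:
  fixes c q :: real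
  assumes "c > 0" "q \<ge> 3" "q \<ge> 12 * c + 24" "d > 0"
  shows "\<exists>D (col :: (nat \<Rightarrow> int) \<Rightarrow> bool list). 2 * (c * q + 1) * real d \<le> real D \<and>
           (\<forall>y. real (length (col y)) \<le> 6 * real d * ln q) \<and> l1_separating d D col"
proof -
  define \<alpha> where "\<alpha> = nat \<lceil>2 * (c * q + 1)\<rceil>"
  have "c * q > 0" using assms(1,2) by simp
  then have "real \<alpha> = real_of_int \<lceil>2 * (c * q + 1)\<rceil>"
    unfolding \<alpha>_def by simp
  then have \<alpha>: "2 * (c * q + 1) \<le> real \<alpha>" "real \<alpha> \<le> 2 * (c * q + 1) + 1"
    using ceiling_correct[of "2 * (c * q + 1)"] by linarith+
  then have "real \<alpha> \<ge> 1" using \<open>c * q > 0\<close> by (simp add: algebra_simps)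
  then have "\<alpha> \<ge> 1" by simp
  obtain k where "q\<^sup>2 \<le> 2 ^ k" "real k + 1 \<le> 6 * ln q"
    using exists_bits_ge_square[OF assms(2)] by blast
  have "2 * exp 1 * (real \<alpha> + 1) \<le> 2 * 3 * (2 * (c * q + 1) + 2)"
    using \<alpha>(2) exp_le by (intro mult_mono) auto
  also have "\<dots> \<le> (12 * c + 24) * q"
    using assms(2) by (simp add: algebra_simps)
  also have "\<dots> \<le> q * q"
    using assms(2,3) by (intro mult_right_mono) auto
  also have "\<dots> \<le> 2 ^ k"
    using \<open>q\<^sup>2 \<le> 2 ^ k\<close> by (simp add: power2_eq_square)
  finally obtain col :: "(nat \<Rightarrow> int) \<Rightarrow> bool list"
    where col: "\<And>y. length (col y) = d * k + 1" "l1_separating d (\<alpha> * d) col"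
    using bool_list_lattice_coloring[OF \<open>\<alpha> \<ge> 1\<close>] by blast
  have "real (length (col y)) \<le> 6 * real d * ln q" for y
  proof -
    have "real (length (col y)) = real d * real k + 1" using col(1) by simp
    also have "\<dots> \<le> real d * (real k + 1)" using assms(4) by (simp add: algebra_simps)
    also have "\<dots> \<le> real d * (6 * ln q)" using \<open>real k + 1 \<le> _\<close> by (intro mult_left_mono) auto
    finally show ?thesis by simp
  qed
  moreover have "2 * (c * q + 1) * real d \<le> real (\<alpha> * d)"
    using \<alpha>(1) by (simp add: mult_right_mono)
  ultimately show ?thesis using col(2) by blast
qed

lemma unbiased_quantizer_exists:
  assumes "c > 0" "q \<ge> 3" "q \<ge> 12 * c + 24" "\<epsilon> > 0" "d > 0"
  shows "\<exists>Enc Dec. unbiased_quantizer nk d (6 * real d * ln q) (c * q * \<epsilon>) \<epsilon> Enc Dec"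
proof -
  obtain D and col :: "(nat \<Rightarrow> int) \<Rightarrow> bool list"
    where "2 * (c * q + 1) * real d \<le> real D" and length: "\<And>y. real (length (col y)) \<le> 6 * real d * ln q"
      and sep: "l1_separating d D col"
    using exists_short_separating_coloring[OF assms(1-3,5)] by blast
  define s where "s = vnorm nk d (\<lambda>_. 1)"
  define h where "h = \<epsilon> / s"
  define R where "R = (c * q + 1) * real d"
  have "s > 0" unfolding s_def using assms(5) by (rule vnorm_ones_pos)
  then have "h > 0" using assms(4) by (simp add: h_def)
  have "2 * R \<le> real D" using \<open>2 * (c * q + 1) * real d \<le> real D\<close> by (simp only: R_def mult.assoc)
  define Enc where "Enc xu = map_pmf col (lattice_round d h xu)" for xu
  have "real (length m) \<le> 6 * real d * ln q" if "m \<in> set_pmf (Enc xu)" for xu m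
    using that length by (auto simp: Enc_def)
  moreover have "(\<forall>m \<in> set_pmf (Enc xu). vnorm nk d (decode_near d h R col m xv - xu) \<le> \<epsilon>) \<and>
      (\<forall>i<d. measure_pmf.expectation (Enc xu) (\<lambda>m. decode_near d h R col m xv i) = xu i)"
    if "vnorm nk d (xu - xv) \<le> c * q * \<epsilon>" for xu xv
  proof -
    have "s * (\<Sum>i<d. \<bar>xu i - xv i\<bar>) \<le> real d * vnorm nk d (xu - xv)"
      using vnorm_ones_mult_sum_abs_le[of nk d "xu - xv"] by (simp add: s_def)
    also have "\<dots> \<le> real d * (c * q * \<epsilon>)"
      using that by (intro mult_left_mono) auto
    finally have close: "(\<Sum>i<d. \<bar>xu i - xv i\<bar>) \<le> (R - real d) * h"
      using \<open>s > 0\<close> by (simp add: R_def h_def field_simps)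
    have "vnorm nk d (decode_near d h R col m xv - xu) \<le> h * s" if "m \<in> set_pmf (Enc xu)" for m
      unfolding s_def using that lattice_quantizer_error[OF \<open>h > 0\<close> sep \<open>2 * R \<le> _\<close> close]
      by (intro vnorm_le_mult_vnorm_ones) (simp add: Enc_def)
    then show ?thesis
      using lattice_quantizer_unbiased[OF \<open>h > 0\<close> sep \<open>2 * R \<le> _\<close> close] \<open>s > 0\<close>
      by (simp add: Enc_def h_def)
  qed
  ultimately show ?thesis
    unfolding unbiased_quantizer_def by blast
qed

theorem theorem1:
  fixes nk :: normkind and c :: real
  assumes "c > 0"
  shows "\<exists>q0 Cbits Cerr :: real. q0 > 1 \<and> Cbits > 0 \<and> Cerr > 0 \<and>
    (\<forall>(d::nat) (q::real) (\<epsilon>::real). q \<ge> q0 \<longrightarrow> \<epsilon> > 0 \<longrightarrow>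
      (\<exists>(Enc :: (nat \<Rightarrow> real) \<Rightarrow> bool list pmf)
         (Dec :: bool list \<Rightarrow> (nat \<Rightarrow> real) \<Rightarrow> (nat \<Rightarrow> real)).
         (\<forall>xu \<in> vecs d. \<forall>m \<in> set_pmf (Enc xu).
              real (length m) \<le> Cbits * real d * ln q) \<and>
         (\<forall>xu \<in> vecs d. \<forall>xv \<in> vecs d.
              vnorm nk d (xu - xv) \<le> c * q * \<epsilon> \<longrightarrow>
              (\<forall>m \<in> set_pmf (Enc xu). vnorm nk d (Dec m xv - xu) \<le> Cerr * \<epsilon>) \<and>
              (\<forall>i<d. measure_pmf.expectation (Enc xu) (\<lambda>m. Dec m xv i) = xu i))))"
proof -
  define q0 where "q0 = max 3 (12 * c + 24)"
  have "\<exists>Enc Dec. unbiased_quantizer nk d (6 * real d * ln q) (c * q * \<epsilon>) (1 * \<epsilon>) Enc Dec"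
    if "q \<ge> q0" "\<epsilon> > 0" for d q \<epsilon>
  proof (cases "d = 0")
    case True
    then show ?thesis using unbiased_quantizer_dim_0[of "1 * \<epsilon>"] that(2) by auto
  next
    case False
    then show ?thesis using unbiased_quantizer_exists[OF assms, of q \<epsilon> d] that by (simp add: q0_def)
  qed
  then show ?thesis
    unfolding unbiased_quantizer_def by (intro exI[of _ q0] exI[of _ 6] exI[of _ 1]) (auto simp: q0_def)
qed

end
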